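(* Let $G_l$ be the path graph on $l\ge 2$ vertices $1,2,\ldots,l$ (with $i$ adjacent to $i+1$), and let $W:\{1,\ldots,l\}\to\mathbb{R}$ be a single-basin potential. Let $\gamma$ be the gap between the smallest and second-smallest eigenvalues of $H_{G_l,W}$. Then $$\gamma\ge\frac{1}{2(|W|+2)l^2},\qquad\text{where } |W|=\max_x W(x)-\min_x W(x).$$
   Context: For a finite simple undirected graph $G$ with vertex set $V_G$, let $\mathcal{H}_G$ be the complex Hilbert space with orthonormal basis $\{|x\rangle : x\in V_G\}$. The graph Laplacian is $L_G=\sum_{x} d_x |x\rangle\langle x| - \sum_{x\sim y}|x\rangle\langle y|$, where $d_x$ is the degree of $x$ and the second sum runs over ordered pairs of adjacent vertices. For a potential $W:V_G\to\mathbb{R}$, $H_{G,W}=L_G+\sum_{x} W(x)|x\rangle\langle x|$. A potential $W$ is single-basin if for every real number $E$ the set $\{x\in V_G : W(x)<E\}$ is a connected set of vertices in $G$. *)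

theory Defs
  imports "Jordan_Normal_Form.Char_Poly"
begin

text \<open>Finite simple graphs on the vertex set {0..<n}, given by an adjacency
  relation E (assumed symmetric and irreflexive where relevant).\<close>

definition degree :: "(nat \<Rightarrow> nat \<Rightarrow> bool) \<Rightarrow> nat \<Rightarrow> nat \<Rightarrow> nat" where
  "degree E n x = card {y. y < n \<and> E x y}"

text \<open>Schroedinger operator H = L_G + W on the complex Hilbert space with
  orthonormal basis indexed by the vertices, as an n x n complex matrix.\<close>
definition hamiltonian :: "(nat \<Rightarrow> nat \<Rightarrow> bool) \<Rightarrow> nat \<Rightarrow> (nat \<Rightarrow> real) \<Rightarrow> complex mat" where
  "hamiltonian E n W = mat n n (\<lambda>(i, j).
      (if i = j then complex_of_real (real (degree E n i) + W i) else 0)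
      - (if E i j then 1 else 0))"

text \<open>Path graph on l vertices 0,...,l-1 (vertex i here is vertex i+1 of the paper).\<close>
definition path_adj :: "nat \<Rightarrow> nat \<Rightarrow> bool" where
  "path_adj i j \<longleftrightarrow> i + 1 = j \<or> j + 1 = i"

definition connected_vertex_set :: "(nat \<Rightarrow> nat \<Rightarrow> bool) \<Rightarrow> nat set \<Rightarrow> bool" where
  "connected_vertex_set E S \<longleftrightarrow>
     (\<forall>x\<in>S. \<forall>y\<in>S. (x, y) \<in> {(a, b). a \<in> S \<and> b \<in> S \<and> E a b}\<^sup>*)"

definition single_basin :: "(nat \<Rightarrow> nat \<Rightarrow> bool) \<Rightarrow> nat \<Rightarrow> (nat \<Rightarrow> real) \<Rightarrow> bool" where
  "single_basin E n W \<longleftrightarrow> (\<forall>e::real. connected_vertex_set E {x. x < n \<and> W x < e})"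

definition eig_count :: "complex mat \<Rightarrow> real \<Rightarrow> nat" where
  "eig_count A t = (\<Sum>z \<in> {z. poly (char_poly A) z = 0 \<and> z \<in> \<real> \<and> Re z \<le> t}.
                      order z (char_poly A))"

text \<open>k-th smallest eigenvalue (k \<ge> 1), counted with multiplicity, of a matrix
  with real spectrum (e.g. a Hermitian matrix).\<close>
definition kth_eig :: "complex mat \<Rightarrow> nat \<Rightarrow> real" where
  "kth_eig A k = Inf {t. eig_count A t \<ge> k}"

definition osc :: "nat \<Rightarrow> (nat \<Rightarrow> real) \<Rightarrow> real" where
  "osc n W = Max (W ` {..<n}) - Min (W ` {..<n})"

end

theory Submission
  imports Defs "HOL-Analysis.Elementary_Metric_Spaces"
begin

text \<open>
  On the path the Hamiltonian is tridiagonal, so its characteristic polynomial is a continuant and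
  a real number \<open>x\<close> is an eigenvalue iff the transfer-matrix solution \<open>u\<^sub>x\<close> of \<open>H u = x u\<close>
  with \<open>u\<^sub>x 0 = 1\<close> satisfies the right boundary condition. A Christoffel--Darboux identity shows
  that all eigenvalues are simple. The ground state \<open>u = u\<^sub>\<lambda>\<close> is positive; the single-basin
  hypothesis makes it unimodal, because the discrete slope of \<open>u\<close> can only decrease across the
  basin \<open>{W < \<lambda>}\<close>. For a second eigenvector \<open>v\<close> with eigenvalue \<open>\<mu>\<close>, the ratio \<open>f = v / u\<close> has
  increments \<open>f (e+1) - f e = (\<lambda> - \<mu>) (\<Sum>j\<le>e. u j v j) / (u e u (e+1))\<close> (Wronskian identity),
  and unimodality together with orthogonality of \<open>u\<close> and \<open>v\<close> bounds them by
  \<open>(\<mu> - \<lambda>) l max\<bar>f\<bar>\<close>. Since \<open>f\<close> changes sign, its total variation is at least \<open>max\<bar>f\<bar>\<close>,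
  hence \<open>\<mu> - \<lambda> \<ge> 1 / l\<^sup>2\<close>, which is stronger than the claimed bound.
\<close>

subsection \<open>Tridiagonal matrices and continuants\<close>

definition tridiag :: "nat \<Rightarrow> (nat \<Rightarrow> 'a::comm_ring_1) \<Rightarrow> 'a \<Rightarrow> 'a mat" where
  "tridiag k d c = mat k k (\<lambda>(i, j). if i = j then d i else if Suc i = j \<or> Suc j = i then c else 0)"

lemma tridiag_carrier [simp]: "tridiag k d c \<in> carrier_mat k k"
  by (simp add: tridiag_def)

lemma det_tridiag_Suc_Suc:
  "det (tridiag (Suc (Suc k)) d c) = d (Suc k) * det (tridiag (Suc k) d c) - c * c * det (tridiag k d c)"
proof -
  let ?A = "tridiag (Suc (Suc k)) d c"
  let ?M = "mat_delete ?A (Suc k) k"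
  have M: "?M \<in> carrier_mat (Suc k) (Suc k)"
    by (simp add: mat_delete_def tridiag_def)
  have "det ?M = (\<Sum>i<Suc k. ?M $$ (i, k) * cofactor ?M i k)"
    by (rule laplace_expansion_column[OF M]) simp
  also have "\<dots> = ?M $$ (k, k) * cofactor ?M k k"
    by (simp add: sum.neutral mat_delete_def tridiag_def)
  also have "\<dots> = c * det (tridiag k d c)"
  proof -
    have "mat_delete ?M k k = tridiag k d c"
      by (rule eq_matI) (auto simp: mat_delete_def tridiag_def)
    then show ?thesis
      by (simp add: cofactor_def mat_delete_def tridiag_def flip: mult_2)
  qed
  finally have det_M: "det ?M = c * det (tridiag k d c)" .
  have del: "mat_delete ?A (Suc k) (Suc k) = tridiag (Suc k) d c"
    by (rule eq_matI) (auto simp: mat_delete_def tridiag_def)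
  have "det ?A = (\<Sum>j<Suc (Suc k). ?A $$ (Suc k, j) * cofactor ?A (Suc k) j)"
    by (rule laplace_expansion_row) simp_all
  also have "\<dots> = ?A $$ (Suc k, k) * cofactor ?A (Suc k) k
      + ?A $$ (Suc k, Suc k) * cofactor ?A (Suc k) (Suc k)"
    by (simp add: sum.neutral tridiag_def)
  also have "\<dots> = c * (- det ?M) + d (Suc k) * det (tridiag (Suc k) d c)"
    by (simp add: cofactor_def del flip: mult_2) (simp add: tridiag_def)
  finally show ?thesis
    by (simp add: det_M algebra_simps)
qed

text \<open>
  \<open>tridiag_minor a x k\<close> is the leading \<open>k \<times> k\<close> principal minor of \<open>A - x I\<close>, where \<open>A\<close> is
  tridiagonal with diagonal \<open>a\<close> and off-diagonal \<open>-1\<close>. As a vector \<open>(u 0, \<dots>, u (n-1))\<close>,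
  \<open>u k = tridiag_minor a x k\<close> satisfies all rows of \<open>A u = x u\<close> but the last, which holds iff
  \<open>tridiag_minor a x n = 0\<close>.
\<close>

fun tridiag_minor :: "(nat \<Rightarrow> real) \<Rightarrow> real \<Rightarrow> nat \<Rightarrow> real" where
  "tridiag_minor a x 0 = 1"
| "tridiag_minor a x (Suc 0) = a 0 - x"
| "tridiag_minor a x (Suc (Suc k)) = (a (Suc k) - x) * tridiag_minor a x (Suc k) - tridiag_minor a x k"

fun tridiag_char_poly :: "(nat \<Rightarrow> real) \<Rightarrow> nat \<Rightarrow> complex poly" where
  "tridiag_char_poly a 0 = 1"
| "tridiag_char_poly a (Suc 0) = [:- of_real (a 0), 1:]"
| "tridiag_char_poly a (Suc (Suc k)) =
     [:- of_real (a (Suc k)), 1:] * tridiag_char_poly a (Suc k) - tridiag_char_poly a k"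

lemma det_tridiag_char_poly:
  "det (tridiag k (\<lambda>i. [:- of_real (a i), 1:]) 1) = tridiag_char_poly a k"
proof (induction a k rule: tridiag_char_poly.induct)
  case (1 a)
  then show ?case by (simp add: tridiag_def)
next
  case (2 a)
  then show ?case by (subst det_single) (auto simp: tridiag_def)
next
  case (3 a k)
  then show ?case by (simp add: det_tridiag_Suc_Suc)
qed

lemma poly_tridiag_char_poly:
  "poly (tridiag_char_poly a k) (of_real x) = of_real ((-1) ^ k * tridiag_minor a x k)"
  by (induction a k rule: tridiag_char_poly.induct) (auto simp: algebra_simps)

lemma tridiag_char_poly_christoffel_darboux:
  "pderiv (tridiag_char_poly a (Suc k)) * tridiag_char_poly a k
     - tridiag_char_poly a (Suc k) * pderiv (tridiag_char_poly a k)
   = (\<Sum>j\<le>k. tridiag_char_poly a j ^ 2)"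
proof (induction k)
  case 0
  then show ?case by (simp add: pderiv_pCons)
next
  case (Suc k)
  let ?P = "tridiag_char_poly a (Suc k)" and ?Q = "tridiag_char_poly a k"
  define L where "L = [:- complex_of_real (a (Suc k)), 1:]"
  have rec: "tridiag_char_poly a (Suc (Suc k)) = L * ?P - ?Q"
    by (simp add: L_def)
  have "pderiv (L * ?P - ?Q) * ?P - (L * ?P - ?Q) * pderiv ?P
      = ?P ^ 2 + (pderiv ?P * ?Q - ?P * pderiv ?Q)"
    by (simp del: tridiag_char_poly.simps
        add: L_def pderiv_diff pderiv_add pderiv_smult pderiv_mult pderiv_pCons algebra_simps power2_eq_square)
  then show ?case
    using Suc.IH by (simp only: rec) (simp del: tridiag_char_poly.simps add: add.commute)
qed

lemma order_tridiag_char_poly_real_root: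
  assumes "n \<ge> 1" and "tridiag_minor a x n = 0"
  shows "order (of_real x) (tridiag_char_poly a n) = 1"
proof -
  obtain k where n: "n = Suc k"
    using assms(1) by (cases n) auto
  let ?z = "complex_of_real x"
  have root: "poly (tridiag_char_poly a n) ?z = 0"
    using assms(2) by (simp add: poly_tridiag_char_poly)
  have "poly (pderiv (tridiag_char_poly a n)) ?z * poly (tridiag_char_poly a k) ?z
      = (\<Sum>j\<le>k. poly (tridiag_char_poly a j) ?z ^ 2)"
    using arg_cong[OF tridiag_char_poly_christoffel_darboux, of "\<lambda>p. poly p ?z" a k] root n
    by (simp add: poly_sum)
  also have "\<dots> = of_real (\<Sum>j\<le>k. (tridiag_minor a x j)\<^sup>2)"
    by (simp add: poly_tridiag_char_poly power_mult_distrib flip: power_mult)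
  also have "\<dots> \<noteq> 0"
  proof -
    have "(tridiag_minor a x 0)\<^sup>2 \<le> (\<Sum>j\<le>k. (tridiag_minor a x j)\<^sup>2)"
      by (rule member_le_sum) auto
    then show ?thesis
      by (simp only: of_real_eq_0_iff) simp
  qed
  finally have "poly (pderiv (tridiag_char_poly a n)) ?z \<noteq> 0"
    by auto
  then show ?thesis
    using order_pderiv[of "tridiag_char_poly a n" ?z] order_0I root by fastforce
qed

lemma isCont_tridiag_minor: "isCont (\<lambda>x. tridiag_minor a x k) x0"
  by (induction a x0 k rule: tridiag_minor.induct) (auto intro!: continuous_intros)

lemma tridiag_minor_uminus: "tridiag_minor (\<lambda>i. - a i) (- x) k = (-1) ^ k * tridiag_minor a x k"
  by (induction a x k rule: tridiag_minor.induct) (auto simp: algebra_simps)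

lemma tridiag_minor_ge_1:
  assumes "\<And>k. k < n \<Longrightarrow> 2 \<le> a k - x" and "k \<le> n"
  shows "1 \<le> tridiag_minor a x k"
proof -
  have chain: "1 \<le> tridiag_minor a x k \<and> tridiag_minor a x k \<le> tridiag_minor a x (Suc k)"
    if "k < n" for k
    using that
  proof (induction k)
    case 0
    then show ?case using assms(1)[of 0] by simp
  next
    case (Suc k)
    then have ih: "1 \<le> tridiag_minor a x k" "tridiag_minor a x k \<le> tridiag_minor a x (Suc k)"
      by auto
    have "2 * tridiag_minor a x (Suc k) \<le> (a (Suc k) - x) * tridiag_minor a x (Suc k)"
      using assms(1)[of "Suc k"] Suc.prems ih by (intro mult_right_mono) auto
    then show ?case
      using ih by (simp only: tridiag_minor.simps) linarith
  qed
  show ?thesis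
  proof (cases k)
    case (Suc m)
    then show ?thesis using chain[of m] assms(2) by auto
  qed simp
qed

lemma tridiag_minor_first_nonpos:
  assumes "n \<ge> 1"
  obtains lam where "\<exists>k\<le>n. tridiag_minor a lam k \<le> 0"
    and "\<And>x k. x < lam \<Longrightarrow> k \<le> n \<Longrightarrow> 0 < tridiag_minor a x k"
proof -
  define S where "S = (\<Union>k\<le>n. {x. tridiag_minor a x k \<le> 0})"
  define m where "m = Min (a ` {..<n}) - 2"
  have "a k - x \<ge> 2" if "x \<le> m" "k < n" for x k
  proof -
    have "Min (a ` {..<n}) \<le> a k"
      using that(2) by (intro Min_le) auto
    then show ?thesis
      using that(1) by (simp add: m_def)
  qed
  then have "m \<le> x" if "x \<in> S" for x
    using that tridiag_minor_ge_1[of n a x] by (force simp: S_def)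
  then have bdd: "bdd_below S"
    by (rule bdd_belowI)
  have "closed S"
    unfolding S_def
    by (intro closed_UN ballI closed_Collect_le continuous_at_imp_continuous_on isCont_tridiag_minor)
      (auto intro: continuous_intros)
  moreover have "S \<noteq> {}"
    using assms by (auto simp: S_def intro!: bexI[of _ 1])
  ultimately have "Inf S \<in> S"
    using bdd closed_contains_Inf by blast
  moreover have "x \<notin> S" if "x < Inf S" for x
    using cInf_lower[OF _ bdd, of x] that by auto
  ultimately show thesis
    by (intro that[of "Inf S"]) (auto simp: S_def not_le)
qed

lemma nonneg_at_limit_from_left:
  fixes f :: "real \<Rightarrow> real"
  assumes "isCont f c" and "\<And>x. x < c \<Longrightarrow> 0 < f x"
  shows "0 \<le> f c"
proof (rule tendsto_lowerbound)
  show "(f \<longlongrightarrow> f c) (at_left c)"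
    using assms(1) by (simp add: isCont_def filterlim_at_split)
  show "\<forall>\<^sub>F x in at_left c. 0 \<le> f x"
    using assms(2) by (auto simp: eventually_at_left_field less_imp_le intro!: exI[of _ "c - 1"])
qed simp

text \<open>
  At the least point where some minor of order \<open>\<le> n\<close> vanishes, it is the one of order \<open>n\<close>:
  at an earlier order \<open>k\<close> the recurrence would make the minor of order \<open>k + 1\<close> negative.
\<close>

lemma tridiag_minor_least_root:
  assumes "n \<ge> 1"
  obtains lam where "tridiag_minor a lam n = 0"
    and "\<And>x. x < lam \<Longrightarrow> 0 < tridiag_minor a x n"
    and "\<And>k. k < n \<Longrightarrow> 0 < tridiag_minor a lam k"
proof -
  obtain lam where ex: "\<exists>k\<le>n. tridiag_minor a lam k \<le> 0"
    and below: "\<And>x k. x < lam \<Longrightarrow> k \<le> n \<Longrightarrow> 0 < tridiag_minor a x k"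
    using tridiag_minor_first_nonpos[OF assms, of a] by blast
  have nonneg: "0 \<le> tridiag_minor a lam k" if "k \<le> n" for k
    using below that by (intro nonneg_at_limit_from_left isCont_tridiag_minor) auto
  define k0 where "k0 = (LEAST k. k \<le> n \<and> tridiag_minor a lam k \<le> 0)"
  have k0: "k0 \<le> n" "tridiag_minor a lam k0 = 0"
    using LeastI_ex[OF ex] nonneg[of k0] by (auto simp: k0_def)
  have before_k0: "0 < tridiag_minor a lam k" if "k < k0" for k
    using not_less_Least[OF that[unfolded k0_def]] that k0 by auto
  have "k0 = n"
  proof (rule ccontr)
    assume "k0 \<noteq> n"
    moreover obtain j where j: "k0 = Suc j"
      using k0 by (cases k0) auto
    ultimately have "0 \<le> tridiag_minor a lam (Suc (Suc j))"
      using k0 nonneg[of "Suc k0"] by simp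
    moreover have "tridiag_minor a lam (Suc (Suc j)) = - tridiag_minor a lam j"
      using k0 j by simp
    moreover have "0 < tridiag_minor a lam j"
      using before_k0 j by simp
    ultimately show False
      by linarith
  qed
  then show thesis
    using that[of lam] k0 before_k0 below by auto
qed

text \<open>A root above the least one is found as minus the least root of the continuant of \<open>-a\<close>.\<close>

lemma tridiag_minor_root_above_least:
  assumes "n \<ge> 2" and "tridiag_minor a lam n = 0" and "0 < tridiag_minor a lam 1"
    and least: "\<And>x. x < lam \<Longrightarrow> 0 < tridiag_minor a x n"
  obtains beta where "tridiag_minor a beta n = 0" and "lam < beta"
proof -
  obtain nu where nu: "tridiag_minor (\<lambda>i. - a i) nu n = 0"
    and pos: "\<And>k. k < n \<Longrightarrow> 0 < tridiag_minor (\<lambda>i. - a i) nu k"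
    using assms(1) tridiag_minor_least_root[of n "\<lambda>i. - a i"] by (metis one_le_numeral order_trans)
  have minor_eq: "tridiag_minor (\<lambda>i. - a i) nu k = (-1) ^ k * tridiag_minor a (- nu) k" for k
    using tridiag_minor_uminus[of a "- nu" k] by simp
  have root: "tridiag_minor a (- nu) n = 0"
    using nu minor_eq[of n] by simp
  have "tridiag_minor a (- nu) 1 < 0"
    using pos[of 1] minor_eq[of 1] assms(1) by (simp only: power_one) simp
  then have "- nu \<noteq> lam"
    using assms(3) by auto
  moreover have "lam \<le> - nu"
    using least[of "- nu"] root by (cases "- nu < lam") auto
  ultimately show thesis
    using that root by auto
qed

subsection \<open>Eigenvalue counting with simple real roots\<close>

lemma eig_count_simple_roots:
  assumes "\<And>x. poly (char_poly A) (of_real x) = 0 \<Longrightarrow> order (of_real x) (char_poly A) = 1"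
  shows "eig_count A t = card {x. poly (char_poly A) (of_real x) = 0 \<and> x \<le> t}"
proof -
  have roots: "{z. poly (char_poly A) z = 0 \<and> z \<in> \<real> \<and> Re z \<le> t}
      = of_real ` {x. poly (char_poly A) (of_real x) = 0 \<and> x \<le> t}"
    by (auto elim!: Reals_cases)
  show ?thesis
    unfolding eig_count_def roots
    by (simp add: sum.reindex inj_on_def assms card_image)
qed

lemma finite_real_roots_char_poly:
  fixes A :: "complex mat"
  assumes "A \<in> carrier_mat n n"
  shows "finite {x. poly (char_poly A) (of_real x) = 0 \<and> P x}"
proof -
  have "char_poly A \<noteq> 0"
    using degree_monic_char_poly[OF assms] by auto
  then have "finite (Re ` {z. poly (char_poly A) z = 0})"
    using poly_roots_finite by blast
  then show ?thesis
    by (rule finite_subset[rotated]) force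
qed

lemma kth_eig_1_least_simple_root:
  assumes "A \<in> carrier_mat n n"
    and "\<And>x. poly (char_poly A) (of_real x) = 0 \<Longrightarrow> order (of_real x) (char_poly A) = 1"
    and "poly (char_poly A) (of_real lam) = 0"
    and "\<And>x. poly (char_poly A) (of_real x) = 0 \<Longrightarrow> lam \<le> x"
  shows "kth_eig A 1 = lam"
proof -
  have "1 \<le> eig_count A t \<longleftrightarrow> lam \<le> t" for t
    using assms(3,4) finite_real_roots_char_poly[OF assms(1), of "\<lambda>x. x \<le> t"]
    by (auto simp: eig_count_simple_roots[OF assms(2)] Suc_le_eq card_gt_0_iff intro: order.trans)
  then have "{t. 1 \<le> eig_count A t} = {lam..}"
    by auto
  then show ?thesis
    by (simp add: kth_eig_def)
qed

lemma kth_eig_2_ge: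
  assumes "A \<in> carrier_mat n n"
    and "\<And>x. poly (char_poly A) (of_real x) = 0 \<Longrightarrow> order (of_real x) (char_poly A) = 1"
    and "poly (char_poly A) (of_real lam) = 0" and "poly (char_poly A) (of_real beta) = 0"
    and "beta \<noteq> lam"
    and "\<And>x. poly (char_poly A) (of_real x) = 0 \<Longrightarrow> x \<noteq> lam \<Longrightarrow> c \<le> x"
  shows "c \<le> kth_eig A 2"
proof -
  let ?roots = "\<lambda>t. {x. poly (char_poly A) (of_real x) = 0 \<and> x \<le> t}"
  have count: "eig_count A t = card (?roots t)" for t
    by (rule eig_count_simple_roots[OF assms(2)])
  have "card {lam, beta} \<le> card (?roots (max lam beta))"
    using assms(3,4) by (intro card_mono finite_real_roots_char_poly[OF assms(1)]) auto
  then have nonempty: "max lam beta \<in> {t. 2 \<le> eig_count A t}"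
    using assms(5) by (simp add: count)
  have "c \<le> t" if "t \<in> {t. 2 \<le> eig_count A t}" for t
  proof -
    have "\<not> ?roots t \<subseteq> {lam}"
      using that card_mono[of "{lam}" "?roots t"] by (auto simp: count)
    then obtain x where "x \<in> ?roots t" "x \<noteq> lam"
      by blast
    then show "c \<le> t"
      using assms(6)[of x] by auto
  qed
  then show ?thesis
    unfolding kth_eig_def using nonempty by (intro cInf_greatest) auto
qed

subsection \<open>The ground state on the path\<close>

locale path_ground_state =
  fixes n :: nat and a W :: "nat \<Rightarrow> real" and lam :: real
  assumes n_ge_2: "n \<ge> 2"
    and diag: "\<And>i. i < n \<Longrightarrow> a i = (if i = 0 \<or> i = n - 1 then 1 else 2) + W i"
    and basin: "\<And>i j k. i \<le> j \<Longrightarrow> j \<le> k \<Longrightarrow> k < n \<Longrightarrow> W i < lam \<Longrightarrow> W k < lam \<Longrightarrow> W j < lam"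
    and root: "tridiag_minor a lam n = 0"
    and pos: "\<And>k. k < n \<Longrightarrow> 0 < tridiag_minor a lam k"
begin

abbreviation u :: "nat \<Rightarrow> real" where
  "u \<equiv> tridiag_minor a lam"

text \<open>
  The discrete derivative of \<open>u\<close>, set to \<open>0\<close> outside the edges: this encodes the boundary rows
  of \<open>H u = \<lambda> u\<close>, so that the equation reads \<open>slope (k+1) - slope k = (W k - \<lambda>) u k\<close> for all
  vertices \<open>k\<close>, endpoints included.
\<close>

definition slope :: "nat \<Rightarrow> real" where
  "slope k = (if k = 0 \<or> k \<ge> n then 0 else u k - u (k - 1))"

lemma slope_Suc_diff:
  assumes "k < n"
  shows "slope (Suc k) - slope k = (W k - lam) * u k"
proof -
  consider "k = 0" | "0 < k" "k < n - 1" | "k = n - 1" "0 < k"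
    using assms n_ge_2 by linarith
  then show ?thesis
  proof cases
    case 1
    then show ?thesis
      using n_ge_2 diag[of 0] by (simp add: slope_def algebra_simps)
  next
    case 2
    then obtain j where j: "k = Suc j"
      by (cases k) auto
    with 2 have "Suc (Suc j) < n"
      by simp
    then show ?thesis
      using j diag[of k] by (simp add: slope_def algebra_simps)
  next
    case 3
    then obtain j where j: "k = Suc j"
      using gr0_implies_Suc by blast
    with 3 have n: "n = Suc (Suc j)"
      by simp
    then have "u j = (a k - lam) * u k"
      using root j by simp
    moreover have "slope (Suc k) = 0" "slope k = u k - u j"
      unfolding slope_def using n j by simp_all
    ultimately show ?thesis
      using 3 diag[of k] by (simp add: algebra_simps)
  qed
qed

lemma slope_diff_eq_sum:
  assumes "s \<le> e" and "e \<le> n"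
  shows "slope e - slope s = (\<Sum>t=s..<e. (W t - lam) * u t)"
proof -
  have "(\<Sum>t=s..<e. (W t - lam) * u t) = (\<Sum>t=s..<e. slope (Suc t) - slope t)"
    using assms slope_Suc_diff by (intro sum.cong) auto
  also have "\<dots> = slope e - slope s"
    by (rule sum_Suc_diff'[OF assms(1)])
  finally show ?thesis by simp
qed

lemma slope_0 [simp]: "slope 0 = 0" and slope_n [simp]: "slope n = 0"
  by (auto simp: slope_def)

lemma slope_decrease_imp_basin:
  assumes "s \<le> e" and "e \<le> n" and "slope e < slope s"
  shows "\<exists>t. s \<le> t \<and> t < e \<and> W t < lam"
proof (rule ccontr)
  assume none: "\<not> ?thesis"
  have "0 \<le> (W t - lam) * u t" if "t \<in> {s..<e}" for t
  proof -
    have "lam \<le> W t" "0 < u t"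
      using none that pos[of t] assms(2) by auto
    then show ?thesis
      by simp
  qed
  then have "0 \<le> (\<Sum>t=s..<e. (W t - lam) * u t)"
    by (rule sum_nonneg)
  then show False
    using slope_diff_eq_sum[OF assms(1,2)] assms(3) by simp
qed

text \<open>
  Once the slope is negative it stays nonpositive: a later positive slope would force points of
  the basin on both sides, hence (basin being an interval) \<open>W < \<lambda>\<close> in between, where the slope
  can only decrease.
\<close>

lemma slope_nonpos_after_neg:
  assumes "i < j" and "j \<le> n" and "slope i < 0"
  shows "slope j \<le> 0"
proof (rule ccontr)
  assume "\<not> slope j \<le> 0"
  obtain t1 where t1: "t1 < i" "W t1 < lam"
    using slope_decrease_imp_basin[of 0 i] assms by auto
  obtain t2 where t2: "j \<le> t2" "t2 < n" "W t2 < lam"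
    using slope_decrease_imp_basin[of j n] assms \<open>\<not> slope j \<le> 0\<close> by auto
  have "(W t - lam) * u t \<le> 0" if "t \<in> {i..<j}" for t
    using basin[of t1 t t2] pos[of t] that t1 t2 by (auto intro: mult_nonpos_nonneg)
  then have "(\<Sum>t=i..<j. (W t - lam) * u t) \<le> 0"
    by (rule sum_nonpos)
  then show False
    using slope_diff_eq_sum[of i j] assms \<open>\<not> slope j \<le> 0\<close> by simp
qed

lemma u_mono_if_slope_nonneg:
  assumes "s \<le> e" and "e < n" and "\<And>k. s < k \<Longrightarrow> k \<le> e \<Longrightarrow> 0 \<le> slope k"
  shows "u s \<le> u e"
  using assms
proof (induction e)
  case (Suc e)
  show ?case
  proof (cases "s = Suc e")
    case False
    then have "u s \<le> u e" and "0 \<le> slope (Suc e)"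
      using Suc by auto
    then show ?thesis
      using Suc.prems by (simp add: slope_def)
  qed simp
qed simp

lemma u_antimono_if_slope_nonpos:
  assumes "s \<le> e" and "e < n" and "\<And>k. s < k \<Longrightarrow> k \<le> e \<Longrightarrow> slope k \<le> 0"
  shows "u e \<le> u s"
  using assms
proof (induction e)
  case (Suc e)
  show ?case
  proof (cases "s = Suc e")
    case False
    then have "u e \<le> u s" and "slope (Suc e) \<le> 0"
      using Suc by auto
    then show ?thesis
      using Suc.prems by (simp add: slope_def)
  qed simp
qed simp

text \<open>This is the unimodality of the ground state.\<close>

lemma u_edge_dominates_side:
  assumes e: "Suc e < n"
  shows "(\<forall>j\<le>e. u j \<le> u e \<and> u j \<le> u (Suc e)) \<or>
         (\<forall>j. e < j \<longrightarrow> j < n \<longrightarrow> u j \<le> u (Suc e) \<and> u j \<le> u e)"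
proof (cases "\<forall>k. 0 < k \<longrightarrow> k \<le> Suc e \<longrightarrow> 0 \<le> slope k")
  case True
  then have "u j \<le> u e \<and> u e \<le> u (Suc e)" if "j \<le> e" for j
    using that e by (auto intro!: u_mono_if_slope_nonneg)
  then show ?thesis
    by force
next
  case False
  then obtain i where i: "0 < i" "i \<le> Suc e" "slope i < 0"
    by (meson not_le)
  have neg: "slope k \<le> 0" if "i \<le> k" "k \<le> n" for k
    using slope_nonpos_after_neg[of i k] i that by (cases "i = k") auto
  have "u j \<le> u (Suc e) \<and> u (Suc e) \<le> u e" if "e < j" "j < n" for j
    using that e i by (auto intro!: u_antimono_if_slope_nonpos neg)
  then show ?thesis
    by force
qed

end

subsection \<open>A second eigenvector and the gap\<close>

locale path_excited_state = path_ground_state +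
  fixes mu :: real
  assumes root_mu: "tridiag_minor a mu n = 0"
    and lam_less_mu: "lam < mu"
begin

abbreviation v :: "nat \<Rightarrow> real" where
  "v \<equiv> tridiag_minor a mu"

lemma wronskian: "u k * v (Suc k) - u (Suc k) * v k = (lam - mu) * (\<Sum>j\<le>k. u j * v j)"
proof (induction k)
  case (Suc k)
  have "u (Suc k) * v (Suc (Suc k)) - u (Suc (Suc k)) * v (Suc k)
      = (lam - mu) * (u (Suc k) * v (Suc k)) + (u k * v (Suc k) - u (Suc k) * v k)"
    by (simp add: algebra_simps)
  with Suc.IH show ?case
    by (simp add: algebra_simps)
qed (simp add: algebra_simps)

lemma orthogonal: "(\<Sum>j<n. u j * v j) = 0"
proof -
  obtain m where m: "n = Suc m"
    using n_ge_2 by (cases n) auto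
  then have "u m * v (Suc m) - u (Suc m) * v m = 0"
    using root root_mu by simp
  then show ?thesis
    using wronskian[of m] lam_less_mu m by (simp add: lessThan_Suc_atMost)
qed

text \<open>
  Orthogonality lets the partial sum up to \<open>e\<close> be replaced by minus the sum over the other
  side of the edge, and on the side dominated by the edge every term is at most
  \<open>F u e u (e+1)\<close>.
\<close>

lemma abs_partial_sum_le:
  assumes e: "Suc e < n" and v_le: "\<And>j. j < n \<Longrightarrow> \<bar>v j\<bar> \<le> F * u j" and "0 \<le> F"
  shows "\<bar>\<Sum>j\<le>e. u j * v j\<bar> \<le> F * n * (u e * u (Suc e))"
proof -
  let ?P = "u e * u (Suc e)"
  have "0 < ?P"
    using pos e by simp
  have term_le: "\<bar>u j * v j\<bar> \<le> F * ?P" if j: "j < n" "u j \<le> u e" "u j \<le> u (Suc e)" for j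
  proof -
    have uj: "0 < u j"
      using pos j by simp
    have "u j * u j \<le> ?P"
      using j uj by (intro mult_mono) auto
    have "\<bar>u j * v j\<bar> \<le> u j * (F * u j)"
      using v_le[OF j(1)] uj by (simp add: abs_mult)
    also have "\<dots> = F * (u j * u j)"
      by simp
    also have "\<dots> \<le> F * ?P"
      using \<open>u j * u j \<le> ?P\<close> \<open>0 \<le> F\<close> by (rule mult_left_mono)
    finally show ?thesis .
  qed
  have "(\<Sum>j=0..<Suc e. u j * v j) + (\<Sum>j=Suc e..<n. u j * v j) = (\<Sum>j=0..<n. u j * v j)"
    using e by (intro sum.atLeastLessThan_concat) auto
  then have other_side: "(\<Sum>j\<le>e. u j * v j) = - (\<Sum>j=Suc e..<n. u j * v j)"
    using orthogonal by (simp add: atLeast0LessThan lessThan_Suc_atMost)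
  from u_edge_dominates_side[OF e] show ?thesis
  proof
    assume "\<forall>j\<le>e. u j \<le> u e \<and> u j \<le> u (Suc e)"
    then have "\<bar>\<Sum>j\<le>e. u j * v j\<bar> \<le> (\<Sum>j\<le>e. F * ?P)"
      using e by (intro order.trans[OF sum_abs] sum_mono term_le) auto
    also have "\<dots> = real (Suc e) * (F * ?P)"
      by simp
    also have "\<dots> \<le> real n * (F * ?P)"
      using e \<open>0 \<le> F\<close> \<open>0 < ?P\<close> by (intro mult_right_mono) auto
    finally show ?thesis
      by (simp add: algebra_simps)
  next
    assume "\<forall>j. e < j \<longrightarrow> j < n \<longrightarrow> u j \<le> u (Suc e) \<and> u j \<le> u e"
    then have "\<bar>\<Sum>j=Suc e..<n. u j * v j\<bar> \<le> (\<Sum>j=Suc e..<n. F * ?P)"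
      by (intro order.trans[OF sum_abs] sum_mono term_le) auto
    also have "\<dots> = real (n - Suc e) * (F * ?P)"
      by simp
    also have "\<dots> \<le> real n * (F * ?P)"
      using \<open>0 \<le> F\<close> \<open>0 < ?P\<close> by (intro mult_right_mono) auto
    finally show ?thesis
      unfolding other_side by (simp add: algebra_simps)
  qed
qed

definition ratio :: "nat \<Rightarrow> real" where
  "ratio j = v j / u j"

definition ratio_max :: real where
  "ratio_max = Max ((\<lambda>j. \<bar>ratio j\<bar>) ` {..<n})"

lemma abs_ratio_le_max: "j < n \<Longrightarrow> \<bar>ratio j\<bar> \<le> ratio_max"
  by (auto simp: ratio_max_def)

lemma ratio_max_attained: "\<exists>j<n. \<bar>ratio j\<bar> = ratio_max"
proof -
  have "ratio_max \<in> (\<lambda>j. \<bar>ratio j\<bar>) ` {..<n}"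
    unfolding ratio_max_def using n_ge_2 by (intro Max_in) (auto simp: lessThan_empty_iff)
  then show ?thesis by auto
qed

lemma one_le_ratio_max: "1 \<le> ratio_max"
  using abs_ratio_le_max[of 0] n_ge_2 by (simp add: ratio_def)

lemma abs_v_le: "j < n \<Longrightarrow> \<bar>v j\<bar> \<le> ratio_max * u j"
  using abs_ratio_le_max[of j] pos[of j] by (simp add: ratio_def abs_div pos_divide_le_eq)

lemma ratio_sign_change: "\<exists>j<n. ratio j * r \<le> 0"
proof (rule ccontr)
  assume "\<not> ?thesis"
  then have "0 < (u j)\<^sup>2 * (ratio j * r)" if "j < n" for j
    using pos[OF that] that by (simp add: not_le)
  then have "0 < (\<Sum>j<n. (u j)\<^sup>2 * (ratio j * r))"
    using n_ge_2 by (intro sum_pos) (auto simp: lessThan_empty_iff)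
  also have "(\<Sum>j<n. (u j)\<^sup>2 * (ratio j * r)) = (\<Sum>j<n. u j * v j) * r"
    unfolding sum_distrib_right
  proof (rule sum.cong)
    fix j assume "j \<in> {..<n}"
    then show "(u j)\<^sup>2 * (ratio j * r) = u j * v j * r"
      using pos[of j] by (simp add: ratio_def power2_eq_square)
  qed simp
  finally show False
    using orthogonal by simp
qed

lemma ratio_step_le:
  assumes e: "Suc e < n"
  shows "\<bar>ratio (Suc e) - ratio e\<bar> \<le> (mu - lam) * ratio_max * n"
proof -
  have u: "0 < u e" "0 < u (Suc e)"
    using pos e by auto
  have "\<bar>ratio (Suc e) - ratio e\<bar> = \<bar>u e * v (Suc e) - u (Suc e) * v e\<bar> / (u e * u (Suc e))"
    using u by (simp add: ratio_def field_simps abs_div)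
  also have "\<dots> = (mu - lam) * \<bar>\<Sum>j\<le>e. u j * v j\<bar> / (u e * u (Suc e))"
    using lam_less_mu by (simp add: wronskian abs_mult)
  also have "\<dots> \<le> (mu - lam) * (ratio_max * n * (u e * u (Suc e))) / (u e * u (Suc e))"
    using abs_partial_sum_le[OF e abs_v_le] one_le_ratio_max lam_less_mu u
    by (intro divide_right_mono mult_left_mono) auto
  also have "\<dots> = (mu - lam) * ratio_max * n"
    using u by simp
  finally show ?thesis .
qed

theorem gap_ge: "1 / (real n)\<^sup>2 \<le> mu - lam"
proof -
  obtain js where js: "js < n" "\<bar>ratio js\<bar> = ratio_max"
    using ratio_max_attained by blast
  obtain jo where jo: "jo < n" "ratio jo * ratio js \<le> 0"
    using ratio_sign_change by blast
  have telescope: "\<bar>ratio k - ratio j\<bar> \<le> (\<Sum>e<n - 1. \<bar>ratio (Suc e) - ratio e\<bar>)"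
    if "j \<le> k" "k < n" for j k
  proof -
    have "\<bar>ratio k - ratio j\<bar> \<le> (\<Sum>e=j..<k. \<bar>ratio (Suc e) - ratio e\<bar>)"
      using sum_Suc_diff'[OF that(1), of ratio] sum_abs by metis
    also have "\<dots> \<le> (\<Sum>e<n - 1. \<bar>ratio (Suc e) - ratio e\<bar>)"
      using that by (intro sum_mono2) auto
    finally show ?thesis .
  qed
  have "ratio_max \<le> \<bar>ratio js - ratio jo\<bar>"
    using js jo mult_le_0_iff[of "ratio jo" "ratio js"] by auto
  also have "\<dots> \<le> (\<Sum>e<n - 1. \<bar>ratio (Suc e) - ratio e\<bar>)"
    using telescope[of jo js] telescope[of js jo] js jo by (cases "jo \<le> js") (auto simp: abs_minus_commute)
  also have "\<dots> \<le> (\<Sum>e<n - 1. (mu - lam) * ratio_max * n)"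
    by (intro sum_mono ratio_step_le) auto
  also have "\<dots> \<le> ratio_max * ((mu - lam) * (real n)\<^sup>2)"
    using lam_less_mu one_le_ratio_max n_ge_2
    by (simp add: power2_eq_square mult_right_mono of_nat_diff algebra_simps)
  finally have "1 \<le> (mu - lam) * (real n)\<^sup>2"
    using one_le_ratio_max by simp
  then show ?thesis
    using n_ge_2 by (simp add: field_simps)
qed

end

subsection \<open>The path graph\<close>

lemma degree_path_adj:
  assumes "2 \<le> n" and "i < n"
  shows "degree path_adj n i = (if i = 0 \<or> i = n - 1 then 1 else 2)"
proof -
  consider "i = 0" | "i = n - 1" "0 < i" | "0 < i" "i < n - 1"
    using assms by linarith
  then show ?thesis
  proof cases
    case 1
    then have "{y. y < n \<and> path_adj i y} = {1}"
      using assms by (auto simp: path_adj_def)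
    then show ?thesis using 1 by (simp add: degree_def)
  next
    case 2
    then have "{y. y < n \<and> path_adj i y} = {i - 1}"
      using assms by (auto simp: path_adj_def)
    then show ?thesis using 2 by (simp add: degree_def)
  next
    case 3
    then have "{y. y < n \<and> path_adj i y} = {i - 1, i + 1}"
      using assms by (auto simp: path_adj_def)
    then show ?thesis using 3 by (simp add: degree_def)
  qed
qed

lemma path_walk_covers_interval:
  assumes "(x, y) \<in> {(a, b). a \<in> S \<and> b \<in> S \<and> path_adj a b}\<^sup>*" and "x \<in> S"
  shows "{min x y..max x y} \<subseteq> S"
  using assms(1)
proof (induction rule: rtrancl_induct)
  case (step y z)
  then have z: "z \<in> S" "z = y + 1 \<or> y = z + 1"
    by (auto simp: path_adj_def)
  show ?case
  proof
    fix j assume j: "j \<in> {min x z..max x z}"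
    show "j \<in> S"
    proof (cases "j = z")
      case False
      then have "j \<in> {min x y..max x y}"
        using j z(2) by auto
      then show ?thesis
        using step.IH by blast
    qed (use z in simp)
  qed
qed (use assms(2) in auto)

lemma single_basin_path_interval:
  assumes "single_basin path_adj n W"
    and "i \<le> j" and "j \<le> k" and "k < n" and "W i < e" and "W k < e"
  shows "W j < e"
proof -
  let ?S = "{x. x < n \<and> W x < e}"
  have "(i, k) \<in> {(a, b). a \<in> ?S \<and> b \<in> ?S \<and> path_adj a b}\<^sup>*"
    using assms unfolding single_basin_def connected_vertex_set_def by auto
  then have "{i..k} \<subseteq> ?S"
    using path_walk_covers_interval[of i k ?S] assms by auto
  then show ?thesis
    using assms by auto
qed

lemma char_poly_hamiltonian_path:
  "char_poly (hamiltonian path_adj l W) = tridiag_char_poly (\<lambda>i. real (degree path_adj l i) + W i) l"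
proof -
  have "char_poly_matrix (hamiltonian path_adj l W)
      = tridiag l (\<lambda>i. [:- of_real (real (degree path_adj l i) + W i), 1:]) 1"
    by (rule eq_matI)
      (auto simp: char_poly_matrix_def hamiltonian_def tridiag_def path_adj_def one_pCons)
  then show ?thesis
    unfolding char_poly_def by (simp only: det_tridiag_char_poly)
qed

lemma single_basin_path_root_gap:
  assumes "l \<ge> 2" and "single_basin path_adj l W"
    and "\<And>i. a i = real (degree path_adj l i) + W i"
    and "tridiag_minor a lam l = 0" and "\<And>k. k < l \<Longrightarrow> 0 < tridiag_minor a lam k"
    and "tridiag_minor a mu l = 0" and "lam < mu"
  shows "1 / (real l)\<^sup>2 \<le> mu - lam"
proof -
  interpret path_excited_state l a W lam mu
    using assms degree_path_adj single_basin_path_interval[OF assms(2)]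
    by unfold_locales auto
  show ?thesis
    by (rule gap_ge)
qed

lemma osc_nonneg:
  assumes "0 < n"
  shows "0 \<le> osc n W"
proof -
  have "Min (W ` {..<n}) \<le> W 0" and "W 0 \<le> Max (W ` {..<n})"
    using assms by (auto intro: Min_le Max_ge)
  then show ?thesis
    unfolding osc_def by simp
qed

theorem hamiltonian_path_spectral_gap:
  assumes "l \<ge> 2" and "single_basin path_adj l W"
  shows "1 / (real l)\<^sup>2 \<le> kth_eig (hamiltonian path_adj l W) 2 - kth_eig (hamiltonian path_adj l W) 1"
proof -
  define a where "a i = real (degree path_adj l i) + W i" for i
  let ?H = "hamiltonian path_adj l W"
  have H: "?H \<in> carrier_mat l l"
    by (simp add: hamiltonian_def)
  have char_poly: "char_poly ?H = tridiag_char_poly a l"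
    by (simp add: char_poly_hamiltonian_path flip: a_def)
  have root_iff: "poly (char_poly ?H) (of_real x) = 0 \<longleftrightarrow> tridiag_minor a x l = 0" for x
    by (simp add: char_poly poly_tridiag_char_poly)
  have simple: "order (of_real x) (char_poly ?H) = 1" if "poly (char_poly ?H) (of_real x) = 0" for x
    using that[unfolded root_iff] assms(1) by (simp add: char_poly order_tridiag_char_poly_real_root)
  obtain lam where lam: "tridiag_minor a lam l = 0" "\<And>x. x < lam \<Longrightarrow> 0 < tridiag_minor a x l"
    "\<And>k. k < l \<Longrightarrow> 0 < tridiag_minor a lam k"
    using tridiag_minor_least_root[of l a] assms(1) by (metis one_le_numeral order_trans)
  have "0 < tridiag_minor a lam 1"
    using lam(3)[of 1] assms(1) by simp
  then obtain beta where beta: "tridiag_minor a beta l = 0" "lam < beta"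
    using tridiag_minor_root_above_least[OF assms(1) lam(1) _ lam(2)] by blast
  have least: "lam \<le> x" if "tridiag_minor a x l = 0" for x
    using lam(2)[of x] that by (cases "x < lam") auto
  have gap: "lam + 1 / (real l)\<^sup>2 \<le> x" if "tridiag_minor a x l = 0" and "x \<noteq> lam" for x
    using single_basin_path_root_gap[OF assms a_def lam(1,3) that(1)] least[OF that(1)] that(2)
    by fastforce
  have "kth_eig ?H 1 = lam"
    using lam(1) least by (intro kth_eig_1_least_simple_root[OF H simple]) (auto simp: root_iff)
  moreover have "lam + 1 / (real l)\<^sup>2 \<le> kth_eig ?H 2"
    using beta lam(1) gap by (intro kth_eig_2_ge[OF H simple, of lam beta]) (auto simp: root_iff)
  ultimately show ?thesis
    by simp
qed

theorem proposition6:
  fixes l :: nat and W :: "nat \<Rightarrow> real"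
  assumes "l \<ge> 2"
    and "single_basin path_adj l W"
  shows "kth_eig (hamiltonian path_adj l W) 2 - kth_eig (hamiltonian path_adj l W) 1
           \<ge> 1 / (2 * (osc l W + 2) * (real l)\<^sup>2)"
proof -
  have "1 / (2 * (osc l W + 2) * (real l)\<^sup>2) \<le> 1 / (real l)\<^sup>2"
    using osc_nonneg[of l W] assms(1) by (intro divide_left_mono mult_right_mono) auto
  then show ?thesis
    using hamiltonian_path_spectral_gap[OF assms] by linarith
qed

end
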